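(* With $n,t,T$, $c(\theta)$ and $s_e(\theta)$ as in the context, we have $|c(\theta)|\le\sqrt{n}$ and $|s_e(\theta)|\le 6\sqrt{n}$ for every $\theta\in\mathbb{R}$.
   Context: Rudin–Shapiro polynomials: $P_0(z)=Q_0(z)=1$ and for $s\ge0$, $P_{s+1}(z)=P_s(z)+z^{2^s}Q_s(z)$, $Q_{s+1}(z)=P_s(z)-z^{2^s}Q_s(z)$. Since the first $2^s$ coefficients of $P_{s+1}$ coincide with those of $P_s$, for each $m\ge1$ let $P_{<m}(z)$ denote the polynomial of degree $m-1$ whose coefficients agree with the first $m$ coefficients of $P_s$ for all sufficiently large $s$. Standing setup: $n$ is a sufficiently large positive integer, $t$ is an odd integer such that $\gamma:=(2^{t+11}+2^t-1)/n$ satisfies $2^{-43}<\gamma\le2^{-40}$, and $T:=2^{t+10}$. With $z=e^{2i\theta}$, define $c(\theta):=\mathrm{Re}\big(z^TP_t(z)+z^{2T}Q_t(z)\big)$ and $s_e(\theta):=\mathrm{Im}\big(P_{<(n+1)}(z)-z^TP_t(z)-z^{2T}P_t(z)\big)$. *)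

theory Defs
  imports "HOL-Computational_Algebra.Polynomial" Complex_Main
begin

primrec RS :: "nat \<Rightarrow> int poly \<times> int poly" where
  "RS 0 = (1, 1)"
| "RS (Suc s) = (fst (RS s) + monom 1 (2^s) * snd (RS s),
                 fst (RS s) - monom 1 (2^s) * snd (RS s))"

definition RSP :: "nat \<Rightarrow> int poly" where "RSP s = fst (RS s)"
definition RSQ :: "nat \<Rightarrow> int poly" where "RSQ s = snd (RS s)"

definition rs_coeff :: "nat \<Rightarrow> int" where
  "rs_coeff k = (THE c. \<forall>\<^sub>F s in sequentially. coeff (RSP s) k = c)"

definition RSP_less :: "nat \<Rightarrow> int poly" where
  "RSP_less m = (\<Sum>k<m. monom (rs_coeff k) k)"

definition ieval :: "int poly \<Rightarrow> complex \<Rightarrow> complex" where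
  "ieval p z = poly (map_poly of_int p) z"

end

theory Submission
  imports Defs
begin

text \<open>On the unit circle the parallelogram law gives \<open>|P_s|\<^sup>2 + |Q_s|\<^sup>2 = 2^(s+1)\<close>, so
  \<open>|P_t|, |Q_t| \<le> sqrt (2^(t+1))\<close>. Splitting a partial sum of length \<open>m = 2^s + r\<close>
  (\<open>r \<le> 2^s\<close>) into a full \<open>P_s\<close> and a shifted partial sum of \<open>\<plusminus>Q_s\<close> of length \<open>r\<close>
  gives by induction \<open>|P_<m| \<le> 4 sqrt m\<close>, because \<open>sqrt (2a) + 4 sqrt r \<le> 4 sqrt (a + r)\<close>
  for \<open>0 \<le> r \<le> a\<close>. The upper bound on \<open>\<gamma>\<close> (the only hypothesis needed) forces
  \<open>n \<ge> 2^(t+3)\<close>, and the triangle inequality finishes both estimates.\<close>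

lemma RSP_0 [simp]: "RSP 0 = 1" and RSQ_0 [simp]: "RSQ 0 = 1"
  by (simp_all add: RSP_def RSQ_def)

lemma RSP_Suc: "RSP (Suc s) = RSP s + monom 1 (2^s) * RSQ s"
  and RSQ_Suc: "RSQ (Suc s) = RSP s - monom 1 (2^s) * RSQ s"
  by (simp_all add: RSP_def RSQ_def)

lemma coeff_RS_eq_0:
  assumes "2^s \<le> k"
  shows "coeff (RSP s) k = 0 \<and> coeff (RSQ s) k = 0"
  using assms
proof (induction s arbitrary: k)
  case 0
  then show ?case by (simp add: coeff_1)
next
  case (Suc s)
  then have "2^s \<le> k" "2^s \<le> k - 2^s" by auto
  with Suc.IH show ?case by (simp add: RSP_Suc RSQ_Suc coeff_monom_mult)
qed

lemma coeff_RSP_Suc: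
  "coeff (RSP (Suc s)) k = (if k < 2^s then coeff (RSP s) k else coeff (RSQ s) (k - 2^s))"
  by (simp add: RSP_Suc coeff_monom_mult coeff_RS_eq_0)

lemma coeff_RSQ_Suc:
  "coeff (RSQ (Suc s)) k = (if k < 2^s then coeff (RSP s) k else - coeff (RSQ s) (k - 2^s))"
  by (simp add: RSQ_Suc coeff_monom_mult coeff_RS_eq_0)

lemma coeff_RSP_stable:
  assumes "k < 2^s" "s \<le> s'"
  shows "coeff (RSP s') k = coeff (RSP s) k"
  using assms(2)
proof (induction s' rule: dec_induct)
  case (step s')
  have "k < 2^s'"
    using assms(1) step.hyps(1) by (meson order_less_le_trans one_le_numeral power_increasing)
  with step.IH show ?case by (simp add: coeff_RSP_Suc)
qed simp

lemma rs_coeff_eq_coeff_RSP: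
  assumes "k < 2^s"
  shows "rs_coeff k = coeff (RSP s) k"
  unfolding rs_coeff_def
proof (rule the_equality)
  show stable: "\<forall>\<^sub>F s' in sequentially. coeff (RSP s') k = coeff (RSP s) k"
    unfolding eventually_sequentially using coeff_RSP_stable[OF assms] by blast
  fix c assume "\<forall>\<^sub>F s' in sequentially. coeff (RSP s') k = c"
  from eventually_conj[OF stable this] have "\<forall>\<^sub>F s' in sequentially. c = coeff (RSP s) k"
    by (rule eventually_mono) simp
  then show "c = coeff (RSP s) k"
    using eventually_const[OF trivial_limit_sequentially] by blast
qed

definition partial_ieval :: "int poly \<Rightarrow> nat \<Rightarrow> complex \<Rightarrow> complex" where
  "partial_ieval p m z = (\<Sum>k<m. of_int (coeff p k) * z^k)"

lemma ieval_sum_monom: "ieval (\<Sum>k<m. monom (c k) k) z = (\<Sum>k<m. of_int (c k) * z^k)"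
proof -
  have "map_poly of_int (\<Sum>k<m. monom (c k) k) = (\<Sum>k<m. monom (of_int (c k) :: complex) k)"
    by (intro poly_eqI) (simp add: coeff_map_poly coeff_sum coeff_monom)
  then show ?thesis by (simp add: ieval_def poly_sum poly_monom)
qed

lemma ieval_eq_partial_ieval:
  assumes "\<And>k. m \<le> k \<Longrightarrow> coeff p k = 0"
  shows "ieval p z = partial_ieval p m z"
proof -
  have "p = (\<Sum>k<m. monom (coeff p k) k)"
    using assms by (intro poly_eqI) (auto simp: coeff_sum coeff_monom)
  then show ?thesis by (metis ieval_sum_monom partial_ieval_def)
qed

lemma ieval_RSP: "ieval (RSP s) z = partial_ieval (RSP s) (2^s) z"
  and ieval_RSQ: "ieval (RSQ s) z = partial_ieval (RSQ s) (2^s) z"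
  by (auto intro: ieval_eq_partial_ieval simp: coeff_RS_eq_0)

lemma ieval_RSP_less:
  assumes "m \<le> 2^s"
  shows "ieval (RSP_less m) z = partial_ieval (RSP s) m z"
  using assms unfolding RSP_less_def ieval_sum_monom partial_ieval_def
  by (intro sum.cong) (auto simp: rs_coeff_eq_coeff_RSP)

lemma sum_lessThan_add:
  "(\<Sum>k<a + r. f k) = (\<Sum>k<a. f k) + (\<Sum>k<r. f (a + k))" for f :: "nat \<Rightarrow> 'a::comm_monoid_add"
  by (induction r) (auto simp: add.assoc)

lemma partial_ieval_RS_Suc_split:
  assumes "2^s \<le> m"
  shows "partial_ieval (RSP (Suc s)) m z
           = partial_ieval (RSP s) (2^s) z + z^(2^s) * partial_ieval (RSQ s) (m - 2^s) z"
    and "partial_ieval (RSQ (Suc s)) m z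
           = partial_ieval (RSP s) (2^s) z - z^(2^s) * partial_ieval (RSQ s) (m - 2^s) z"
proof -
  have m: "m = 2^s + (m - 2^s)" using assms by simp
  show "partial_ieval (RSP (Suc s)) m z
          = partial_ieval (RSP s) (2^s) z + z^(2^s) * partial_ieval (RSQ s) (m - 2^s) z"
    by (subst (1 2) m, unfold partial_ieval_def sum_lessThan_add)
       (simp add: coeff_RSP_Suc sum_distrib_left power_add mult_ac)
  show "partial_ieval (RSQ (Suc s)) m z
          = partial_ieval (RSP s) (2^s) z - z^(2^s) * partial_ieval (RSQ s) (m - 2^s) z"
    by (subst (1 2) m, unfold partial_ieval_def sum_lessThan_add)
       (simp add: coeff_RSQ_Suc sum_distrib_left power_add mult_ac sum_negf)
qed

lemma partial_ieval_RS_Suc_short: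
  assumes "m \<le> 2^s"
  shows "partial_ieval (RSP (Suc s)) m z = partial_ieval (RSP s) m z"
    and "partial_ieval (RSQ (Suc s)) m z = partial_ieval (RSP s) m z"
  using assms unfolding partial_ieval_def
  by (auto intro!: sum.cong simp: coeff_RSP_Suc coeff_RSQ_Suc)

lemma RS_parseval:
  assumes "norm z = 1"
  shows "(norm (ieval (RSP s) z))^2 + (norm (ieval (RSQ s) z))^2 = 2^(s+1)"
proof (induction s)
  case (Suc s)
  define a where "a = ieval (RSP s) z"
  define b where "b = z^(2^s) * ieval (RSQ s) z"
  have "ieval (RSP (Suc s)) z = a + b" "ieval (RSQ (Suc s)) z = a - b"
    by (simp_all add: ieval_RSP ieval_RSQ partial_ieval_RS_Suc_split a_def b_def)
  moreover have "(norm (a + b))^2 + (norm (a - b))^2 = 2 * (norm a)^2 + 2 * (norm b)^2"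
    by (simp only: cmod_power2) (simp add: power2_eq_square algebra_simps)
  moreover have "norm b = norm (ieval (RSQ s) z)"
    using assms by (simp add: b_def norm_mult norm_power)
  ultimately show ?case using Suc.IH by (simp add: a_def)
qed (simp add: ieval_def)

lemma norm_ieval_RS_le:
  assumes "norm z = 1"
  shows "norm (ieval (RSP s) z) \<le> sqrt (2^(s+1))" and "norm (ieval (RSQ s) z) \<le> sqrt (2^(s+1))"
proof -
  have "(norm (ieval (RSP s) z))^2 \<le> 2^(s+1)" "(norm (ieval (RSQ s) z))^2 \<le> 2^(s+1)"
    using RS_parseval[OF assms, of s] zero_le_power2[of "norm (ieval (RSP s) z)"]
      zero_le_power2[of "norm (ieval (RSQ s) z)"] by linarith+
  then show "norm (ieval (RSP s) z) \<le> sqrt (2^(s+1))" "norm (ieval (RSQ s) z) \<le> sqrt (2^(s+1))"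
    by (simp_all only: real_le_rsqrt)
qed

lemma sqrt_double_add_le:
  fixes a r :: real
  assumes "0 \<le> r" "r \<le> a"
  shows "sqrt (2 * a) + 4 * sqrt r \<le> 4 * sqrt (a + r)"
proof -
  define u v where "u = sqrt a" and "v = sqrt r"
  have uv: "0 \<le> u" "0 \<le> v" "v \<le> u" "u^2 = a" "v^2 = r"
    using assms by (auto simp: u_def v_def real_sqrt_le_mono)
  have "sqrt (2 * a) \<le> 3/2 * u"
    using uv by (intro real_le_lsqrt) (auto simp: power2_eq_square)
  moreover have "3/2 * u + 4 * v \<le> sqrt (16 * (a + r))"
  proof (rule real_le_rsqrt)
    have "u * v \<le> u^2"
      unfolding power2_eq_square using uv(3,1) by (rule mult_left_mono)
    moreover have "(3/2 * u + 4 * v)^2 = 9/4 * u^2 + 12 * (u * v) + 16 * v^2"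
      by (simp add: power2_eq_square algebra_simps)
    ultimately show "(3/2 * u + 4 * v)^2 \<le> 16 * (a + r)"
      using uv assms unfolding distrib_left by linarith
  qed
  moreover have "sqrt (16 * (a + r)) = 4 * sqrt (a + r)"
    unfolding real_sqrt_mult using real_sqrt_unique[of 4 16] by simp
  ultimately show ?thesis by (simp add: v_def)
qed

lemma norm_partial_ieval_RS_le:
  assumes "norm z = 1" "m \<le> 2^s"
  shows "norm (partial_ieval (RSP s) m z) \<le> 4 * sqrt m
       \<and> norm (partial_ieval (RSQ s) m z) \<le> 4 * sqrt m"
  using assms(2)
proof (induction s arbitrary: m)
  case 0
  then have "m = 0 \<or> m = 1" by auto
  then show ?case by (auto simp: partial_ieval_def)
next
  case (Suc s)
  show ?case
  proof (cases "m \<le> 2^s")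
    case True
    with Suc.IH show ?thesis by (simp add: partial_ieval_RS_Suc_short)
  next
    case False
    define r where "r = m - 2^s"
    have r: "r \<le> 2^s" "real m = 2^s + real r"
      using Suc.prems False by (auto simp: r_def of_nat_diff)
    let ?a = "partial_ieval (RSP s) (2^s) z" and ?b = "z^(2^s) * partial_ieval (RSQ s) r z"
    have "norm (partial_ieval (RSP (Suc s)) m z) \<le> norm ?a + norm ?b"
      using False by (simp add: partial_ieval_RS_Suc_split r_def norm_triangle_ineq)
    moreover have "norm (partial_ieval (RSQ (Suc s)) m z) \<le> norm ?a + norm ?b"
      using False by (simp add: partial_ieval_RS_Suc_split r_def norm_triangle_ineq4)
    moreover have "norm ?a \<le> sqrt (2 * 2^s)"
      using norm_ieval_RS_le(1)[OF assms(1), of s] by (simp add: ieval_RSP)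
    moreover have "norm ?b \<le> 4 * sqrt r"
      using Suc.IH[OF r(1)] assms(1) by (simp add: norm_mult norm_power)
    moreover have "sqrt (2 * 2^s) + 4 * sqrt r \<le> 4 * sqrt m"
      unfolding r(2) using r(1) by (intro sqrt_double_add_le) simp_all
    ultimately show ?thesis by linarith
  qed
qed

lemma norm_ieval_RSP_less_le:
  assumes "norm z = 1"
  shows "norm (ieval (RSP_less m) z) \<le> 4 * sqrt m"
proof -
  have "m \<le> 2^m" by (simp add: less_imp_le)
  then show ?thesis
    using norm_partial_ieval_RS_le[OF assms] ieval_RSP_less by metis
qed

lemma norm_ieval_RS_le_half_sqrt:
  assumes "norm z = 1" "2^(t+3) \<le> x"
  shows "norm (ieval (RSP t) z) \<le> sqrt x / 2" and "norm (ieval (RSQ t) z) \<le> sqrt x / 2"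
proof -
  have "(2::real)^(t+3) = 4 * 2^(t+1)"
    by (simp add: power_add)
  then have "2 * sqrt (2^(t+1)) = sqrt (2^(t+3))"
    by (simp only: real_sqrt_mult real_sqrt_four)
  also have "\<dots> \<le> sqrt x"
    using assms(2) by simp
  finally show "norm (ieval (RSP t) z) \<le> sqrt x / 2" "norm (ieval (RSQ t) z) \<le> sqrt x / 2"
    using norm_ieval_RS_le[OF assms(1), of t] by linarith+
qed

lemma abs_Re_RS_shifted_sum_le:
  assumes "norm z = 1" "2^(t+3) \<le> x"
  shows "\<bar>Re (z^T * ieval (RSP t) z + z^(2*T) * ieval (RSQ t) z)\<bar> \<le> sqrt x"
proof -
  have "\<bar>Re (z^T * ieval (RSP t) z + z^(2*T) * ieval (RSQ t) z)\<bar>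
          \<le> norm (z^T * ieval (RSP t) z) + norm (z^(2*T) * ieval (RSQ t) z)"
    by (rule order_trans[OF abs_Re_le_cmod norm_triangle_ineq])
  also have "\<dots> = norm (ieval (RSP t) z) + norm (ieval (RSQ t) z)"
    using assms(1) by (simp add: norm_mult norm_power)
  finally show ?thesis
    using norm_ieval_RS_le_half_sqrt[OF assms] by linarith
qed

lemma abs_Im_RSP_less_minus_shifted_le:
  assumes "norm z = 1" "2^(t+3) \<le> real n"
  shows "\<bar>Im (ieval (RSP_less (n+1)) z - z^T * ieval (RSP t) z - z^(2*T) * ieval (RSP t) z)\<bar>
           \<le> 6 * sqrt n"
proof -
  let ?L = "ieval (RSP_less (n+1)) z" and ?A = "z^T * ieval (RSP t) z"
    and ?B = "z^(2*T) * ieval (RSP t) z"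
  have "\<bar>Im (?L - ?A - ?B)\<bar> \<le> norm ?L + norm ?A + norm ?B"
    using abs_Im_le_cmod[of "?L - ?A - ?B"] norm_triangle_ineq4[of "?L - ?A" ?B]
      norm_triangle_ineq4[of ?L ?A] by linarith
  also have "\<dots> = norm ?L + 2 * norm (ieval (RSP t) z)"
    using assms(1) by (simp add: norm_mult norm_power)
  also have "\<dots> \<le> 4 * sqrt (real (n+1)) + sqrt n"
    using norm_ieval_RSP_less_le[OF assms(1), of "n+1"] norm_ieval_RS_le_half_sqrt(1)[OF assms]
    by linarith
  also have "4 * sqrt (real (n+1)) \<le> 5 * sqrt n"
  proof -
    have "(2::real) \<le> 2^(t+3)"
      using power_increasing[of 1 "t+3" "2::real"] by simp
    with assms(2) have "2 \<le> real n" by linarith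
    have "4 * sqrt (real (n+1)) = sqrt (16 * real (n+1))"
      unfolding real_sqrt_mult using real_sqrt_unique[of 4 16] by simp
    also have "\<dots> \<le> sqrt (25 * real n)"
      using \<open>2 \<le> real n\<close> by simp
    also have "\<dots> = 5 * sqrt n"
      unfolding real_sqrt_mult using real_sqrt_unique[of 5 25] by simp
    finally show ?thesis .
  qed
  finally show ?thesis by simp
qed

lemma two_pow_le_of_gamma_le:
  assumes "0 < n" "(2^(t+11) + 2^t - 1) / real n \<le> 1 / 2^40"
  shows "2^(t+3) \<le> real n"
proof -
  have "(2^(t+11) + 2^t - 1 :: real) \<le> real n / 2^40"
    using assms by (simp add: divide_simps)
  moreover have "(2::real)^(t+3) \<le> 2^(t+11) + 2^t - 1"
  proof -
    have "(2::real)^(t+3) = 8 * 2^t" "(2::real)^(t+11) = 2048 * 2^t" "(1::real) \<le> 2^t"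
      by (simp_all add: power_add)
    then show ?thesis by linarith
  qed
  moreover have "real n / 2^40 \<le> real n"
    by simp
  ultimately show ?thesis by linarith
qed

theorem lemma3p3:
  shows "\<exists>N::nat. \<forall>n\<ge>N. \<forall>t::nat. \<forall>\<theta>::real.
     (odd t \<and> 0 < n \<and>
      1 / 2^43 < (2^(t+11) + 2^t - 1) / real n \<and>
      (2^(t+11) + 2^t - 1) / real n \<le> 1 / 2^40) \<longrightarrow>
     (let T = 2^(t+10); z = cis (2 * \<theta>) in
        \<bar>Re (z^T * ieval (RSP t) z + z^(2*T) * ieval (RSQ t) z)\<bar> \<le> sqrt (real n) \<and>
        \<bar>Im (ieval (RSP_less (n+1)) z - z^T * ieval (RSP t) z - z^(2*T) * ieval (RSP t) z)\<bar>
          \<le> 6 * sqrt (real n))"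
proof (intro exI[of _ 0] allI impI)
  fix n t :: nat and \<theta> :: real
  assume "odd t \<and> 0 < n \<and> 1 / 2^43 < (2^(t+11) + 2^t - 1) / real n \<and>
      (2^(t+11) + 2^t - 1) / real n \<le> 1 / 2^40"
  then have n: "2^(t+3) \<le> real n"
    by (intro two_pow_le_of_gamma_le) auto
  have z: "norm (cis (2 * \<theta>)) = 1" by simp
  show "let T = 2^(t+10); z = cis (2 * \<theta>) in
        \<bar>Re (z^T * ieval (RSP t) z + z^(2*T) * ieval (RSQ t) z)\<bar> \<le> sqrt (real n) \<and>
        \<bar>Im (ieval (RSP_less (n+1)) z - z^T * ieval (RSP t) z - z^(2*T) * ieval (RSP t) z)\<bar>
          \<le> 6 * sqrt (real n)"
    unfolding Let_def
    using abs_Re_RS_shifted_sum_le[OF z n] abs_Im_RSP_less_minus_shifted_le[OF z n] by blast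
qed

end
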